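(* There is a constant $C>0$ depending only on $\Omega$ such that for every grid function $f\in\mathcal{G}_N$, \[ \| \nabla_N f \|_6 \le C \| \Delta_N f \|_2 . \]
   Context: Let $K\in\mathbb{N}$, $N=2K+1$, $h=1/N$, $\Omega=(0,1)^3$, with grid points $(x_i,y_j,z_k)=(ih,jh,kh)$. $\mathcal{G}_N$ is the space of real grid functions $f:\mathbb{Z}^3\to\mathbb{R}$ that are $N$-periodic in each index. Norms: $\|f\|_p=(h^3\sum_{i,j,k=0}^{N-1}|f_{i,j,k}|^p)^{1/p}$ for $1\le p<\infty$; for a vector-valued grid function the pointwise Euclidean norm is used inside the sum. Every $f\in\mathcal{G}_N$ has a discrete Fourier expansion $f_{i,j,k}=\sum_{\ell,m,n=-K}^{K}\hat f_{\ell,m,n}\exp(2\pi \mathrm{i}(\ell x_i+m y_j+n z_k))$. The pseudo-spectral derivative $\mathcal{D}_x f$ has coefficients $2\pi\mathrm{i}\ell\,\hat f_{\ell,m,n}$ (similarly $\mathcal{D}_y,\mathcal{D}_z$); $\mathcal{D}_x^2$ has coefficients $-4\pi^2\ell^2\hat f_{\ell,m,n}$, etc. $\nabla_N f=(\mathcal{D}_xf,\mathcal{D}_yf,\mathcal{D}_zf)$ and $\Delta_N=\mathcal{D}_x^2+\mathcal{D}_y^2+\mathcal{D}_z^2$. The constant $C$ is independent of $N$. *)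

theory Defs
  imports Complex_Main
begin

type_synonym grid_fun = "int \<Rightarrow> int \<Rightarrow> int \<Rightarrow> real"

definition periodic_grid :: "nat \<Rightarrow> grid_fun \<Rightarrow> bool" where
  "periodic_grid N f \<longleftrightarrow>
     (\<forall>i j k. f (i + int N) j k = f i j k \<and> f i (j + int N) k = f i j k \<and> f i j (k + int N) = f i j k)"

text \<open>Discrete Fourier coefficient hat f_{l,m,n}, i.e. the unique coefficients of the
  expansion f_{i,j,k} = sum_{l,m,n=-K}^{K} hat f_{l,m,n} exp(2 pi i (l x_i + m y_j + n z_k)),
  with x_i = i h, h = 1/N.\<close>
definition dft_coeff :: "nat \<Rightarrow> grid_fun \<Rightarrow> int \<Rightarrow> int \<Rightarrow> int \<Rightarrow> complex" where
  "dft_coeff N f l m n =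
     (1 / of_nat N ^ 3) *
     (\<Sum>i<N. \<Sum>j<N. \<Sum>k<N. complex_of_real (f (int i) (int j) (int k)) *
        cis (- 2 * pi * (real_of_int l * real i + real_of_int m * real j + real_of_int n * real k) / real N))"

text \<open>For the real symmetric multipliers used below the result is real; we take the
  real part so that the operator maps G_N to G_N.\<close>
definition spec_op :: "nat \<Rightarrow> (int \<Rightarrow> int \<Rightarrow> int \<Rightarrow> complex) \<Rightarrow> grid_fun \<Rightarrow> grid_fun" where
  "spec_op K mult f i j k =
     (let N = 2 * K + 1 in
      Re (\<Sum>l\<in>{-int K..int K}. \<Sum>m\<in>{-int K..int K}. \<Sum>n\<in>{-int K..int K}.
            mult l m n * dft_coeff N f l m n *
            cis (2 * pi * (real_of_int l * real_of_int i + real_of_int m * real_of_int j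
                           + real_of_int n * real_of_int k) / real N)))"

definition Dx :: "nat \<Rightarrow> grid_fun \<Rightarrow> grid_fun" where
  "Dx K = spec_op K (\<lambda>l m n. \<i> * complex_of_real (2 * pi * real_of_int l))"
definition Dy :: "nat \<Rightarrow> grid_fun \<Rightarrow> grid_fun" where
  "Dy K = spec_op K (\<lambda>l m n. \<i> * complex_of_real (2 * pi * real_of_int m))"
definition Dz :: "nat \<Rightarrow> grid_fun \<Rightarrow> grid_fun" where
  "Dz K = spec_op K (\<lambda>l m n. \<i> * complex_of_real (2 * pi * real_of_int n))"

definition Dxx :: "nat \<Rightarrow> grid_fun \<Rightarrow> grid_fun" where
  "Dxx K = spec_op K (\<lambda>l m n. complex_of_real (- 4 * pi^2 * (real_of_int l)^2))"
definition Dyy :: "nat \<Rightarrow> grid_fun \<Rightarrow> grid_fun" where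
  "Dyy K = spec_op K (\<lambda>l m n. complex_of_real (- 4 * pi^2 * (real_of_int m)^2))"
definition Dzz :: "nat \<Rightarrow> grid_fun \<Rightarrow> grid_fun" where
  "Dzz K = spec_op K (\<lambda>l m n. complex_of_real (- 4 * pi^2 * (real_of_int n)^2))"

definition lap_N :: "nat \<Rightarrow> grid_fun \<Rightarrow> grid_fun" where
  "lap_N K f i j k = Dxx K f i j k + Dyy K f i j k + Dzz K f i j k"

definition grid_norm :: "nat \<Rightarrow> real \<Rightarrow> grid_fun \<Rightarrow> real" where
  "grid_norm N p f =
     ((1 / real N) ^ 3 * (\<Sum>i<N. \<Sum>j<N. \<Sum>k<N. \<bar>f (int i) (int j) (int k)\<bar> powr p)) powr (1 / p)"

definition grad_norm :: "nat \<Rightarrow> real \<Rightarrow> grid_fun \<Rightarrow> real" where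
  "grad_norm K p f = grid_norm (2 * K + 1) p
     (\<lambda>i j k. sqrt ((Dx K f i j k)^2 + (Dy K f i j k)^2 + (Dz K f i j k)^2))"

end

theory Submission
  imports Defs "HOL-Analysis.Analysis"
begin

(*
  The gradient components and the Laplacian are Fourier multipliers on the frequency cube
  {-K..K}^3, and the Laplacian symbol dominates each derivative symbol:
  |q|^2 |2 \<pi> q_x|^2 \<le> (4 \<pi>^2 |q|^2)^2.  By Parseval it therefore suffices to prove the critical
  Sobolev inequality  h^3 \<Sum>|g|^6 \<le> C E^3  for a mean-zero trigonometric polynomial g with
  frequencies in the cube, where E = \<Sum> |q|^2 |a_q|^2 is its H^1 energy.

  Cut |g|^6 along the dyadic level sets {|g| > \<lambda> 2^j}, with \<lambda>^2 = 104 E.  Split g into its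
  frequencies with |q|_\<infinity> \<le> 4^j and the rest: Cauchy-Schwarz together with
  \<Sum>_{0 < |q|_\<infinity> \<le> R} |q|^-2 \<le> 26 R bounds the low part by \<lambda> 2^j / 2, so on the j-th level
  set the high part exceeds \<lambda> 2^j / 2.  Chebyshev and Parseval bound the contribution of that
  level set by 16^j times the energy of the frequencies outside the cube of radius 4^j, and
  since |q|^2 > 16^j for those frequencies the sum over j is at most (16/15) E.
*)

section \<open>Discrete Fourier analysis on the grid\<close>

definition freq_cube :: "nat \<Rightarrow> (int \<times> int \<times> int) set" where
  "freq_cube K = {-int K..int K} \<times> {-int K..int K} \<times> {-int K..int K}"

definition grid_cube :: "nat \<Rightarrow> (nat \<times> nat \<times> nat) set" where
  "grid_cube N = {..<N} \<times> {..<N} \<times> {..<N}"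

fun grid_char :: "nat \<Rightarrow> int \<times> int \<times> int \<Rightarrow> nat \<times> nat \<times> nat \<Rightarrow> complex" where
  "grid_char N (l, m, n) (i, j, k) =
     cis (2 * pi * (real_of_int l * real i + real_of_int m * real j + real_of_int n * real k) / real N)"

definition trig_poly ::
  "nat \<Rightarrow> (int \<times> int \<times> int) set \<Rightarrow> (int \<times> int \<times> int \<Rightarrow> complex) \<Rightarrow> nat \<times> nat \<times> nat \<Rightarrow> complex"
  where "trig_poly N S a p = (\<Sum>q\<in>S. a q * grid_char N q p)"

lemma finite_freq_cube [simp]: "finite (freq_cube K)"
  by (simp add: freq_cube_def)

lemma finite_grid_cube [simp]: "finite (grid_cube N)"
  by (simp add: grid_cube_def)

lemma card_grid_cube: "card (grid_cube N) = N ^ 3"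
  by (simp add: grid_cube_def card_cartesian_product power3_eq_cube)

lemma sum_grid_cube:
  "(\<Sum>p\<in>grid_cube N. g p) = (\<Sum>i<N. \<Sum>j<N. \<Sum>k<N. g (i, j, k))"
  by (simp add: grid_cube_def sum.cartesian_product)

lemma sum_freq_cube:
  "(\<Sum>q\<in>freq_cube K. g q) = (\<Sum>l\<in>{-int K..int K}. \<Sum>m\<in>{-int K..int K}. \<Sum>n\<in>{-int K..int K}. g (l, m, n))"
  by (simp add: freq_cube_def sum.cartesian_product)

lemma norm_grid_char [simp]: "cmod (grid_char N q p) = 1"
  by (cases q; cases p) simp

lemma cnj_grid_char: "cnj (grid_char N (l, m, n) p) = grid_char N (-l, -m, -n) p"
  by (cases p) (simp add: cis_cnj algebra_simps minus_divide_left)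

lemma grid_char_mult_cnj:
  "grid_char N (l, m, n) p * cnj (grid_char N (l', m', n') p) = grid_char N (l - l', m - m', n - n') p"
  by (cases p) (simp add: cis_cnj cis_mult algebra_simps add_divide_distrib diff_divide_distrib)

lemma sum_roots_of_unity:
  fixes a :: int
  assumes N: "N > 0" and a: "\<bar>a\<bar> < int N"
  shows "(\<Sum>i<N. cis (2 * pi * (real_of_int a * real i) / real N)) = (if a = 0 then of_nat N else 0)"
proof (cases "a = 0")
  case False
  define z where "z = cis (2 * pi * real_of_int a / real N)"
  have powers: "cis (2 * pi * (real_of_int a * real i) / real N) = z ^ i" for i
    unfolding z_def Complex.DeMoivre by (rule arg_cong[where f = cis]) (simp add: field_simps)
  have "z ^ N = 1"
    unfolding z_def Complex.DeMoivre using N by (simp add: cis_multiple_2pi)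
  moreover have "z \<noteq> 1"
  proof
    assume "z = 1"
    then obtain n :: int where "2 * pi * real_of_int a / real N = real_of_int n * 2 * pi"
      unfolding z_def using cos_one_2pi_int by (metis cis.sel(1) one_complex.sel(1))
    then have "a = n * int N"
      using N by (simp add: field_simps) (metis of_int_eq_iff of_int_mult of_int_of_nat_eq)
    with a False show False
      by (cases "n = 0") (auto simp: abs_mult intro: order.trans[OF _ mult_right_mono[of 1 "\<bar>n\<bar>"]])
  qed
  ultimately show ?thesis
    using False by (simp add: powers geometric_sum)
qed simp

lemma sum_grid_char:
  assumes "N > 0" "\<bar>l\<bar> < int N" "\<bar>m\<bar> < int N" "\<bar>n\<bar> < int N"
  shows "(\<Sum>p\<in>grid_cube N. grid_char N (l, m, n) p)
           = (if (l, m, n) = (0, 0, 0) then of_nat N ^ 3 else 0)"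
proof -
  have factor: "grid_char N (l, m, n) (i, j, k) =
      cis (2 * pi * (real_of_int l * real i) / real N) * cis (2 * pi * (real_of_int m * real j) / real N)
      * cis (2 * pi * (real_of_int n * real k) / real N)" for i j k
    by (simp add: cis_mult add_divide_distrib distrib_left)
  have "(\<Sum>p\<in>grid_cube N. grid_char N (l, m, n) p) =
      (\<Sum>i<N. cis (2 * pi * (real_of_int l * real i) / real N)) *
      (\<Sum>j<N. cis (2 * pi * (real_of_int m * real j) / real N)) *
      (\<Sum>k<N. cis (2 * pi * (real_of_int n * real k) / real N))"
    unfolding sum_grid_cube factor sum_product
    by (simp add: sum_distrib_left sum_distrib_right mult.assoc) (rule sum.cong[OF refl], rule sum.swap)
  then show ?thesis
    using assms by (simp add: sum_roots_of_unity power3_eq_cube)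
qed

lemma grid_char_orthogonal:
  assumes "q \<in> freq_cube K" "q' \<in> freq_cube K" "2 * K < N"
  shows "(\<Sum>p\<in>grid_cube N. grid_char N q p * cnj (grid_char N q' p))
           = (if q = q' then of_nat N ^ 3 else 0)"
  using assms
  by (cases q; cases q') (auto simp: grid_char_mult_cnj freq_cube_def sum_grid_char)

lemma parseval_trig_poly:
  assumes "S \<subseteq> freq_cube K" "2 * K < N"
  shows "(\<Sum>p\<in>grid_cube N. (cmod (trig_poly N S a p))\<^sup>2) = real N ^ 3 * (\<Sum>q\<in>S. (cmod (a q))\<^sup>2)"
proof -
  have "finite S"
    using assms(1) by (rule finite_subset) simp
  have "complex_of_real (\<Sum>p\<in>grid_cube N. (cmod (trig_poly N S a p))\<^sup>2)
      = (\<Sum>q\<in>S. \<Sum>q'\<in>S. a q * cnj (a q') *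
           (\<Sum>p\<in>grid_cube N. grid_char N q p * cnj (grid_char N q' p)))"
    unfolding trig_poly_def of_real_sum complex_norm_square cnj_sum sum_product
    by (subst sum.swap, rule sum.cong[OF refl], subst sum.swap)
      (simp add: sum_distrib_left mult_ac)
  also have "\<dots> = (\<Sum>q\<in>S. \<Sum>q'\<in>S. a q * cnj (a q') * (if q = q' then of_nat N ^ 3 else 0))"
    using assms by (intro sum.cong refl) (subst grid_char_orthogonal[of _ K], auto)
  also have "\<dots> = (\<Sum>q\<in>S. a q * cnj (a q) * of_nat N ^ 3)"
    using \<open>finite S\<close> by (simp add: if_distrib sum.delta cong: if_cong)
  also have "\<dots> = complex_of_real (real N ^ 3 * (\<Sum>q\<in>S. (cmod (a q))\<^sup>2))"
    by (simp add: sum_distrib_left mult.commute flip: complex_norm_square)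
  finally show ?thesis
    by (simp only: of_real_eq_iff)
qed

section \<open>Lattice sums\<close>

fun freq_sqnorm :: "int \<times> int \<times> int \<Rightarrow> real" where
  "freq_sqnorm (l, m, n) = real_of_int (l\<^sup>2 + m\<^sup>2 + n\<^sup>2)"

lemma freq_sqnorm_nonneg [simp]: "0 \<le> freq_sqnorm q"
  by (cases q) simp

lemma freq_sqnorm_pos: "q \<noteq> (0, 0, 0) \<Longrightarrow> 0 < freq_sqnorm q"
proof -
  obtain l m n where q: "q = (l, m, n)"
    by (cases q)
  assume "q \<noteq> (0, 0, 0)"
  then have "0 < l\<^sup>2 + m\<^sup>2 + n\<^sup>2"
    unfolding q by (metis add_pos_nonneg add_nonneg_pos zero_le_power2 zero_less_power2 prod.inject
        add_nonneg_nonneg order_le_less)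
  then show ?thesis
    by (simp only: q freq_sqnorm.simps of_int_0_less_iff)
qed

lemma freq_sqnorm_outside_cube:
  assumes "q \<notin> freq_cube R"
  shows "(real R + 1)\<^sup>2 \<le> freq_sqnorm q"
proof -
  obtain l m n where q: "q = (l, m, n)"
    by (cases q)
  have square_ge: "(int R + 1)\<^sup>2 \<le> x\<^sup>2" if "int R < \<bar>x\<bar>" for x :: int
    using power_mono[of "int R + 1" "\<bar>x\<bar>" 2] that by simp
  have "int R < \<bar>l\<bar> \<or> int R < \<bar>m\<bar> \<or> int R < \<bar>n\<bar>"
    using assms unfolding q freq_cube_def by auto
  then have "(int R + 1)\<^sup>2 \<le> l\<^sup>2 + m\<^sup>2 + n\<^sup>2"
    using square_ge[of l] square_ge[of m] square_ge[of n]
      zero_le_power2[of l] zero_le_power2[of m] zero_le_power2[of n] by linarith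
  then have "real_of_int ((int R + 1)\<^sup>2) \<le> real_of_int (l\<^sup>2 + m\<^sup>2 + n\<^sup>2)"
    by (simp only: of_int_le_iff)
  then show ?thesis
    unfolding q by simp
qed

lemma card_freq_cube: "card (freq_cube R) = (2 * R + 1) ^ 3"
proof -
  have "card {-int R..int R} = 2 * R + 1"
    by simp
  then show ?thesis
    by (simp add: freq_cube_def card_cartesian_product power3_eq_cube)
qed

lemma freq_cube_mono: "R \<le> R' \<Longrightarrow> freq_cube R \<subseteq> freq_cube R'"
  unfolding freq_cube_def by auto

lemma sum_inverse_freq_sqnorm_le: "(\<Sum>q\<in>freq_cube R - {(0, 0, 0)}. 1 / freq_sqnorm q) \<le> 26 * real R"
proof (induction R)
  case 0
  have "freq_cube 0 - {(0, 0, 0)} = {}"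
    unfolding freq_cube_def by auto
  then show ?case
    by (simp only:) simp
next
  case (Suc R)
  let ?shell = "freq_cube (Suc R) - freq_cube R"
  have "real (card ?shell) = real (2 * R + 3) ^ 3 - real (2 * R + 1) ^ 3"
    using freq_cube_mono[of R "Suc R"] card_mono[OF _ freq_cube_mono[of R "Suc R"]]
    by (simp add: card_Diff_subset card_freq_cube of_nat_diff add_ac)
  also have "\<dots> \<le> 26 * (real R + 1)\<^sup>2"
    by (simp add: power2_eq_square power3_eq_cube algebra_simps)
  finally have card_shell: "real (card ?shell) \<le> 26 * (real R + 1)\<^sup>2" .
  have "(\<Sum>q\<in>?shell. 1 / freq_sqnorm q) \<le> real (card ?shell) * (1 / (real R + 1)\<^sup>2)"
  proof (rule sum_bounded_above)
    fix q
    assume "q \<in> ?shell"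
    then have "(real R + 1)\<^sup>2 \<le> freq_sqnorm q"
      by (intro freq_sqnorm_outside_cube) simp
    then show "1 / freq_sqnorm q \<le> 1 / (real R + 1)\<^sup>2"
      by (intro frac_le) auto
  qed
  also have "\<dots> \<le> 26"
    using card_shell by (simp add: field_simps)
  finally have shell: "(\<Sum>q\<in>?shell. 1 / freq_sqnorm q) \<le> 26" .
  have "freq_cube (Suc R) - {(0, 0, 0)} = (freq_cube R - {(0, 0, 0)}) \<union> ?shell"
    using freq_cube_mono[of R "Suc R"] by (auto simp: freq_cube_def)
  then have "(\<Sum>q\<in>freq_cube (Suc R) - {(0, 0, 0)}. 1 / freq_sqnorm q)
      = (\<Sum>q\<in>freq_cube R - {(0, 0, 0)}. 1 / freq_sqnorm q) + (\<Sum>q\<in>?shell. 1 / freq_sqnorm q)"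
    by (simp only:) (rule sum.union_disjoint, auto)
  then show ?case
    using Suc.IH shell by simp
qed

lemma norm_trig_poly_sq_le:
  assumes S: "S \<subseteq> freq_cube R" and mean_zero: "a (0, 0, 0) = 0"
  shows "(cmod (trig_poly N S a p))\<^sup>2 \<le> 26 * real R * (\<Sum>q\<in>S. freq_sqnorm q * (cmod (a q))\<^sup>2)"
proof -
  let ?S' = "S - {(0, 0, 0)}" and ?w = "\<lambda>q. sqrt (freq_sqnorm q)"
  have "finite S"
    using S by (rule finite_subset) simp
  have "cmod (trig_poly N S a p) \<le> (\<Sum>q\<in>S. cmod (a q))"
    unfolding trig_poly_def using norm_sum[of "\<lambda>q. a q * grid_char N q p" S]
    by (simp add: norm_mult)
  also have "\<dots> = (\<Sum>q\<in>?S'. cmod (a q))"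
    using \<open>finite S\<close> mean_zero by (intro sum.mono_neutral_right) auto
  also have "\<dots> = (\<Sum>q\<in>?S'. (?w q * cmod (a q)) * (1 / ?w q))"
  proof (intro sum.cong refl)
    fix q
    assume "q \<in> ?S'"
    then have "0 < freq_sqnorm q"
      by (intro freq_sqnorm_pos) auto
    then show "cmod (a q) = (?w q * cmod (a q)) * (1 / ?w q)"
      by simp
  qed
  finally have "(cmod (trig_poly N S a p))\<^sup>2 \<le> (\<Sum>q\<in>?S'. (?w q * cmod (a q)) * (1 / ?w q))\<^sup>2"
    by (intro power_mono) auto
  also have "\<dots> \<le> (\<Sum>q\<in>?S'. (?w q * cmod (a q))\<^sup>2) * (\<Sum>q\<in>?S'. (1 / ?w q)\<^sup>2)"
    by (rule Cauchy_Schwarz_ineq_sum)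
  also have "\<dots> = (\<Sum>q\<in>?S'. freq_sqnorm q * (cmod (a q))\<^sup>2) * (\<Sum>q\<in>?S'. 1 / freq_sqnorm q)"
    by (simp add: power_mult_distrib power_divide)
  also have "\<dots> \<le> (\<Sum>q\<in>S. freq_sqnorm q * (cmod (a q))\<^sup>2) * (26 * real R)"
  proof (rule mult_mono)
    have "(\<Sum>q\<in>?S'. 1 / freq_sqnorm q) \<le> (\<Sum>q\<in>freq_cube R - {(0, 0, 0)}. 1 / freq_sqnorm q)"
      using S by (intro sum_mono2) auto
    then show "(\<Sum>q\<in>?S'. 1 / freq_sqnorm q) \<le> 26 * real R"
      using sum_inverse_freq_sqnorm_le by (rule order.trans)
  qed (use \<open>finite S\<close> in \<open>auto intro: sum_mono2 sum_nonneg\<close>)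
  finally show ?thesis
    by (simp add: mult_ac)
qed

section \<open>Dyadic level sets and the Sobolev inequality for trigonometric polynomials\<close>

lemma abs_pow_le_dyadic_layers:
  fixes x lam :: real
  assumes "0 \<le> lam" "\<bar>x\<bar> \<le> lam * 2 ^ J"
  shows "\<bar>x\<bar> ^ n \<le> lam ^ n + (\<Sum>j<J. if lam * 2 ^ j < \<bar>x\<bar> then (lam * 2 ^ (j + 1)) ^ n else 0)"
  using assms(2)
proof (induction J)
  case 0
  then show ?case
    by (simp add: power_mono)
next
  case (Suc J)
  have layers_nonneg: "0 \<le> (\<Sum>j<J. if lam * 2 ^ j < \<bar>x\<bar> then (lam * 2 ^ (j + 1)) ^ n else 0)"
    using assms(1) by (intro sum_nonneg) simp
  show ?case
  proof (cases "\<bar>x\<bar> \<le> lam * 2 ^ J")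
    case True
    with Suc.IH assms(1) show ?thesis
      by simp
  next
    case False
    then have "\<bar>x\<bar> ^ n \<le> (lam * 2 ^ (J + 1)) ^ n"
      using Suc.prems by (intro power_mono) auto
    with False layers_nonneg assms(1) show ?thesis
      by (simp add: add_increasing)
  qed
qed

lemma dyadic_level_le:
  fixes lam a l h :: real
  assumes "0 \<le> lam" "a \<le> l + h" "l \<le> lam * 2 ^ j / 2"
  shows "(if lam * 2 ^ j < a then (lam * 2 ^ (j + 1)) ^ 6 else 0) \<le> 256 * lam ^ 4 * 16 ^ j * h\<^sup>2"
proof (cases "lam * 2 ^ j < a")
  case True
  then have "(lam * 2 ^ j / 2)\<^sup>2 \<le> h\<^sup>2"
    using assms by (intro power_mono) auto
  moreover have "(lam * 2 ^ (j + 1)) ^ 6 = 256 * lam ^ 4 * 16 ^ j * (lam * 2 ^ j / 2)\<^sup>2"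
  proof -
    have "(16::real) ^ j = (2 ^ j) ^ 4"
      by (simp flip: power_mult add: mult.commute[of j 4] power_mult)
    then show ?thesis
      by (simp add: power_mult_distrib field_simps eval_nat_numeral)
  qed
  ultimately show ?thesis
    using True assms(1) by (simp add: mult_left_mono)
qed simp

lemma pow6_le_dyadic_splitting:
  fixes x lam :: real and low high :: "nat \<Rightarrow> real"
  assumes "0 \<le> lam" "\<And>j. \<bar>x\<bar> \<le> low j + high j" "\<And>j. low j \<le> lam * 2 ^ j / 2"
    and "high J = 0"
  shows "x ^ 6 \<le> lam ^ 6 + (\<Sum>j<J. 256 * lam ^ 4 * 16 ^ j * (high j)\<^sup>2)"
proof -
  have "\<bar>x\<bar> \<le> lam * 2 ^ J"
    using assms(1) assms(2)[of J] assms(3)[of J] assms(4) by simp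
  then have "\<bar>x\<bar> ^ 6 \<le> lam ^ 6 + (\<Sum>j<J. if lam * 2 ^ j < \<bar>x\<bar> then (lam * 2 ^ (j + 1)) ^ 6 else 0)"
    by (rule abs_pow_le_dyadic_layers[OF assms(1)])
  also have "\<dots> \<le> lam ^ 6 + (\<Sum>j<J. 256 * lam ^ 4 * 16 ^ j * (high j)\<^sup>2)"
    using assms by (intro add_left_mono sum_mono dyadic_level_le) auto
  finally show ?thesis
    by (simp add: power_even_abs)
qed

lemma sum_powers_below_le:
  fixes b r :: real
  assumes b: "1 < b" and "0 \<le> r"
  shows "(\<Sum>j<J. if b ^ j < r then b ^ j else 0) \<le> b / (b - 1) * r"
proof (induction J)
  case 0
  then show ?case
    using assms by simp
next
  case (Suc J)
  show ?case
  proof (cases "b ^ J < r")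
    case True
    have "b ^ j < r" if "j < Suc J" for j
      using power_increasing[of j J b] that b True by linarith
    then have "(\<Sum>j<Suc J. if b ^ j < r then b ^ j else 0) = (\<Sum>j<Suc J. b ^ j)"
      by (intro sum.cong) auto
    also have "\<dots> = (b * b ^ J - 1) / (b - 1)"
      using b by (subst geometric_sum) auto
    also have "\<dots> \<le> b * r / (b - 1)"
    proof (rule divide_right_mono)
      have "b * b ^ J < b * r"
        using b True by simp
      then show "b * b ^ J - 1 \<le> b * r"
        by simp
    qed (use b in simp)
    finally show ?thesis
      by simp
  next
    case False
    then show ?thesis
      using Suc.IH by simp
  qed
qed

lemma sum_dyadic_tails_le:
  fixes c :: "int \<times> int \<times> int \<Rightarrow> real"
  assumes "finite S" "\<And>q. 0 \<le> c q"
  shows "(\<Sum>j<J. 16 ^ j * (\<Sum>q\<in>S - freq_cube (4 ^ j). c q)) \<le> 16 / 15 * (\<Sum>q\<in>S. freq_sqnorm q * c q)"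
proof -
  have outside: "(16::real) ^ j < freq_sqnorm q" if "q \<notin> freq_cube (4 ^ j)" for j q
  proof -
    have "(16::real) ^ j = (real (4 ^ j))\<^sup>2"
      by (simp flip: power_mult add: mult.commute[of j 2] power_mult)
    also have "\<dots> < (real (4 ^ j) + 1)\<^sup>2"
      by (intro power_strict_mono) auto
    finally have "(16::real) ^ j < (real (4 ^ j) + 1)\<^sup>2" .
    with freq_sqnorm_outside_cube[OF that] show ?thesis
      by linarith
  qed
  have "16 ^ j * (\<Sum>q\<in>S - freq_cube (4 ^ j). c q)
      = (\<Sum>q\<in>S. c q * (if q \<notin> freq_cube (4 ^ j) then 16 ^ j else 0))" for j
    using assms(1) unfolding sum_distrib_left by (intro sum.mono_neutral_cong_left) auto
  then have "(\<Sum>j<J. 16 ^ j * (\<Sum>q\<in>S - freq_cube (4 ^ j). c q))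
      = (\<Sum>q\<in>S. c q * (\<Sum>j<J. if q \<notin> freq_cube (4 ^ j) then 16 ^ j else 0))"
    by (simp add: sum_distrib_left sum.swap[of _ "{..<J}"])
  also have "\<dots> \<le> (\<Sum>q\<in>S. c q * (\<Sum>j<J. if 16 ^ j < freq_sqnorm q then 16 ^ j else 0))"
    using assms(2) outside by (intro sum_mono mult_left_mono) auto
  also have "\<dots> \<le> (\<Sum>q\<in>S. c q * (16 / 15 * freq_sqnorm q))"
    using sum_powers_below_le[of 16 "freq_sqnorm _"] assms(2)
    by (intro sum_mono mult_left_mono) auto
  also have "\<dots> = 16 / 15 * (\<Sum>q\<in>S. freq_sqnorm q * c q)"
    by (simp add: sum_distrib_left mult_ac)
  finally show ?thesis .
qed

lemma trig_poly_Int_Diff: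
  "finite S \<Longrightarrow> trig_poly N S a p = trig_poly N (S \<inter> T) a p + trig_poly N (S - T) a p"
  unfolding trig_poly_def by (rule sum.Int_Diff)

lemma Re_trig_poly_pow6_le:
  fixes K :: nat and a :: "int \<times> int \<times> int \<Rightarrow> complex"
  assumes mean_zero: "a (0, 0, 0) = 0"
  defines "E \<equiv> \<Sum>q\<in>freq_cube K. freq_sqnorm q * (cmod (a q))\<^sup>2"
  shows "(Re (trig_poly N (freq_cube K) a p)) ^ 6 \<le> (104 * E) ^ 3 +
    (\<Sum>j<K. 256 * (104 * E)\<^sup>2 * 16 ^ j * (cmod (trig_poly N (freq_cube K - freq_cube (4 ^ j)) a p))\<^sup>2)"
proof -
  define lam where "lam = sqrt (104 * E)"
  let ?F = "trig_poly N (freq_cube K) a p"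
  have "0 \<le> E"
    unfolding E_def by (intro sum_nonneg) simp
  then have "0 \<le> lam" and lam_sq: "lam\<^sup>2 = 104 * E"
    unfolding lam_def by simp_all
  have low_le: "cmod (trig_poly N (freq_cube K \<inter> freq_cube R) a p) \<le> lam * sqrt (real R) / 2" for R
  proof (rule power2_le_imp_le)
    have "(cmod (trig_poly N (freq_cube K \<inter> freq_cube R) a p))\<^sup>2
        \<le> 26 * real R * (\<Sum>q\<in>freq_cube K \<inter> freq_cube R. freq_sqnorm q * (cmod (a q))\<^sup>2)"
      using mean_zero by (intro norm_trig_poly_sq_le) auto
    also have "\<dots> \<le> 26 * real R * E"
      unfolding E_def by (intro mult_left_mono sum_mono2) auto
    also have "\<dots> = (lam * sqrt (real R) / 2)\<^sup>2"
      by (simp add: power_mult_distrib power_divide lam_sq)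
    finally show "(cmod (trig_poly N (freq_cube K \<inter> freq_cube R) a p))\<^sup>2 \<le> (lam * sqrt (real R) / 2)\<^sup>2" .
    show "0 \<le> lam * sqrt (real R) / 2"
      using \<open>0 \<le> lam\<close> by simp
  qed
  have split: "\<bar>Re ?F\<bar> \<le> cmod (trig_poly N (freq_cube K \<inter> freq_cube (4 ^ j)) a p)
      + cmod (trig_poly N (freq_cube K - freq_cube (4 ^ j)) a p)" for j
    using abs_Re_le_cmod[of ?F] norm_triangle_ineq trig_poly_Int_Diff[of "freq_cube K"]
    by (metis finite_freq_cube order.trans)
  have "K \<le> 4 ^ K"
    using less_exp[of K] power_mono[of "2::nat" 4 K] by linarith
  then have "freq_cube K - freq_cube (4 ^ K) = {}"
    using freq_cube_mono by blast
  then have no_high: "trig_poly N (freq_cube K - freq_cube (4 ^ K)) a p = 0"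
    unfolding trig_poly_def by (simp only: sum.empty)
  have "(Re ?F) ^ 6 \<le> lam ^ 6 +
      (\<Sum>j<K. 256 * lam ^ 4 * 16 ^ j * (cmod (trig_poly N (freq_cube K - freq_cube (4 ^ j)) a p))\<^sup>2)"
    using \<open>0 \<le> lam\<close> split low_le[of "4 ^ _"] no_high
    by (intro pow6_le_dyadic_splitting) (auto simp: real_sqrt_power)
  moreover have "lam ^ 6 = (104 * E) ^ 3" "lam ^ 4 = (104 * E)\<^sup>2"
    unfolding lam_sq[symmetric] by (simp_all flip: power_mult)
  ultimately show ?thesis
    by simp
qed

lemma sum_Re_trig_poly_pow6_le:
  fixes K :: nat and a :: "int \<times> int \<times> int \<Rightarrow> complex"
  assumes mean_zero: "a (0, 0, 0) = 0" and "2 * K < N"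
  defines "E \<equiv> \<Sum>q\<in>freq_cube K. freq_sqnorm q * (cmod (a q))\<^sup>2"
  shows "(\<Sum>p\<in>grid_cube N. (Re (trig_poly N (freq_cube K) a p)) ^ 6) \<le> 5000000 * real N ^ 3 * E ^ 3"
proof -
  let ?high = "\<lambda>j. freq_cube K - freq_cube (4 ^ j)"
  have "0 \<le> E"
    unfolding E_def by (intro sum_nonneg) simp
  have "(\<Sum>p\<in>grid_cube N. (Re (trig_poly N (freq_cube K) a p)) ^ 6)
      \<le> (\<Sum>p\<in>grid_cube N. (104 * E) ^ 3 +
           (\<Sum>j<K. 256 * (104 * E)\<^sup>2 * 16 ^ j * (cmod (trig_poly N (?high j) a p))\<^sup>2))"
    by (intro sum_mono Re_trig_poly_pow6_le[where a = a and K = K, OF mean_zero, folded E_def])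
  also have "\<dots> = real N ^ 3 * (104 * E) ^ 3 + 256 * (104 * E)\<^sup>2 *
      (\<Sum>j<K. 16 ^ j * (\<Sum>p\<in>grid_cube N. (cmod (trig_poly N (?high j) a p))\<^sup>2))"
    by (simp add: sum.distrib card_grid_cube sum_distrib_left sum.swap[of _ "grid_cube N"] mult_ac)
  also have "\<dots> = real N ^ 3 * (104 * E) ^ 3 + 256 * (104 * E)\<^sup>2 * real N ^ 3 *
      (\<Sum>j<K. 16 ^ j * (\<Sum>q\<in>?high j. (cmod (a q))\<^sup>2))"
    using \<open>2 * K < N\<close> by (simp add: parseval_trig_poly[of _ K] sum_distrib_left mult_ac)
  also have "\<dots> \<le> real N ^ 3 * (104 * E) ^ 3 + 256 * (104 * E)\<^sup>2 * real N ^ 3 * (16 / 15 * E)"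
    unfolding E_def by (intro add_left_mono mult_left_mono sum_dyadic_tails_le) auto
  also have "\<dots> \<le> 5000000 * real N ^ 3 * E ^ 3"
    using \<open>0 \<le> E\<close> by (simp add: power_mult_distrib eval_nat_numeral mult_ac mult_right_mono)
  finally show ?thesis .
qed

section \<open>Pseudo-spectral operators\<close>

fun eval_grid :: "grid_fun \<Rightarrow> nat \<times> nat \<times> nat \<Rightarrow> real" where
  "eval_grid g (i, j, k) = g (int i) (int j) (int k)"

definition grid_mean :: "nat \<Rightarrow> (nat \<times> nat \<times> nat \<Rightarrow> real) \<Rightarrow> real" where
  "grid_mean N g = (1 / real N) ^ 3 * (\<Sum>p\<in>grid_cube N. g p)"

definition grad_abs :: "nat \<Rightarrow> grid_fun \<Rightarrow> grid_fun" where
  "grad_abs K f i j k = sqrt ((Dx K f i j k)\<^sup>2 + (Dy K f i j k)\<^sup>2 + (Dz K f i j k)\<^sup>2)"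

lemma grid_mean_nonneg: "(\<And>p. 0 \<le> g p) \<Longrightarrow> 0 \<le> grid_mean N g"
  unfolding grid_mean_def by (intro mult_nonneg_nonneg sum_nonneg) auto

lemma grid_norm_power_eq:
  "n \<noteq> 0 \<Longrightarrow> grid_norm N (real n) g = grid_mean N (\<lambda>p. \<bar>eval_grid g p\<bar> ^ n) powr (1 / real n)"
  by (simp add: grid_norm_def grid_mean_def sum_grid_cube powr_realpow')

lemma grad_norm_eq: "grad_norm K r f = grid_norm (2 * K + 1) r (grad_abs K f)"
  unfolding grad_norm_def grad_abs_def ..

lemma eval_grid_spec_op:
  "eval_grid (spec_op K mu f) p = Re (trig_poly (2 * K + 1) (freq_cube K)
     (\<lambda>(l, m, n). mu l m n * dft_coeff (2 * K + 1) f l m n) p)"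
  by (cases p) (simp add: spec_op_def trig_poly_def sum_freq_cube)

lemma dft_coeff_uminus: "dft_coeff N f (-l) (-m) (-n) = cnj (dft_coeff N f l m n)"
  by (simp add: dft_coeff_def cnj_sum cis_cnj algebra_simps minus_divide_left)

lemma Im_trig_poly_hermitian:
  assumes hermitian: "\<And>l m n. a (-l, -m, -n) = cnj (a (l, m, n))"
  shows "Im (trig_poly N (freq_cube K) a p) = 0"
proof -
  let ?neg = "\<lambda>(l::int, m::int, n::int). (-l, -m, -n)"
  have neg_mem: "?neg q \<in> freq_cube K" if "q \<in> freq_cube K" for q
    using that by (cases q) (auto simp: freq_cube_def)
  have "?neg (?neg q) = q" for q
    by (cases q) simp
  with neg_mem have "?neg ` freq_cube K = freq_cube K"
    by (metis (no_types, lifting) image_eqI image_subsetI subset_antisym subsetI)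
  have "cnj (trig_poly N (freq_cube K) a p) = (\<Sum>q\<in>freq_cube K. a (?neg q) * grid_char N (?neg q) p)"
    unfolding trig_poly_def cnj_sum by (intro sum.cong refl) (auto simp: hermitian cnj_grid_char)
  also have "\<dots> = trig_poly N (?neg ` freq_cube K) a p"
    unfolding trig_poly_def by (subst sum.reindex) (auto simp: inj_on_def)
  finally show ?thesis
    using \<open>?neg ` freq_cube K = freq_cube K\<close> by (metis cnj.sel(2) complex_cnj_cancel_iff neg_equal_zero)
qed

lemma eval_grid_lap_N:
  "eval_grid (lap_N K f) p = Re (trig_poly (2 * K + 1) (freq_cube K)
     (\<lambda>(l, m, n). complex_of_real (- 4 * pi\<^sup>2 * freq_sqnorm (l, m, n)) * dft_coeff (2 * K + 1) f l m n) p)"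
proof -
  have "eval_grid (lap_N K f) p = eval_grid (Dxx K f) p + eval_grid (Dyy K f) p + eval_grid (Dzz K f) p"
    by (cases p) (simp add: lap_N_def)
  then show ?thesis
    unfolding Dxx_def Dyy_def Dzz_def eval_grid_spec_op trig_poly_def
    by (simp add: sum.distrib [symmetric] split_def algebra_simps)
qed

lemma sum_lap_N_sq:
  "(\<Sum>p\<in>grid_cube (2 * K + 1). (eval_grid (lap_N K f) p)\<^sup>2) = real (2 * K + 1) ^ 3 *
     (\<Sum>(l, m, n)\<in>freq_cube K. (4 * pi\<^sup>2 * freq_sqnorm (l, m, n))\<^sup>2 * (cmod (dft_coeff (2 * K + 1) f l m n))\<^sup>2)"
proof -
  let ?a = "\<lambda>(l, m, n). complex_of_real (- 4 * pi\<^sup>2 * freq_sqnorm (l, m, n)) * dft_coeff (2 * K + 1) f l m n"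
  have "Im (trig_poly (2 * K + 1) (freq_cube K) ?a p) = 0" for p
    by (rule Im_trig_poly_hermitian) (simp add: dft_coeff_uminus)
  then have real_sq: "(eval_grid (lap_N K f) p)\<^sup>2 = (cmod (trig_poly (2 * K + 1) (freq_cube K) ?a p))\<^sup>2" for p
    unfolding eval_grid_lap_N by (simp add: cmod_power2)
  have "(\<Sum>p\<in>grid_cube (2 * K + 1). (eval_grid (lap_N K f) p)\<^sup>2)
      = real (2 * K + 1) ^ 3 * (\<Sum>q\<in>freq_cube K. (cmod (?a q))\<^sup>2)"
    unfolding real_sq by (rule parseval_trig_poly[of _ K]) simp_all
  also have "(\<Sum>q\<in>freq_cube K. (cmod (?a q))\<^sup>2) =
      (\<Sum>(l, m, n)\<in>freq_cube K. (4 * pi\<^sup>2 * freq_sqnorm (l, m, n))\<^sup>2 * (cmod (dft_coeff (2 * K + 1) f l m n))\<^sup>2)"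
    by (intro sum.cong refl) (auto simp: norm_mult power_mult_distrib simp del: freq_sqnorm.simps of_real_mult)
  finally show ?thesis .
qed

lemma mean_spec_op_pow6_le:
  fixes K :: nat and mu :: "int \<Rightarrow> int \<Rightarrow> int \<Rightarrow> complex"
  assumes mu0: "mu 0 0 0 = 0"
    and mu_le: "\<And>l m n. freq_sqnorm (l, m, n) * (cmod (mu l m n))\<^sup>2 \<le> (4 * pi\<^sup>2 * freq_sqnorm (l, m, n))\<^sup>2"
  defines "N \<equiv> 2 * K + 1"
  shows "grid_mean N (\<lambda>p. (eval_grid (spec_op K mu f) p) ^ 6)
           \<le> 5000000 * (grid_mean N (\<lambda>p. (eval_grid (lap_N K f) p)\<^sup>2)) ^ 3"
proof -
  let ?a = "\<lambda>(l, m, n). mu l m n * dft_coeff N f l m n"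
  let ?lap_energy = "\<Sum>(l, m, n)\<in>freq_cube K. (4 * pi\<^sup>2 * freq_sqnorm (l, m, n))\<^sup>2 * (cmod (dft_coeff N f l m n))\<^sup>2"
  have "(\<Sum>p\<in>grid_cube N. (eval_grid (spec_op K mu f) p) ^ 6)
      = (\<Sum>p\<in>grid_cube N. (Re (trig_poly N (freq_cube K) ?a p)) ^ 6)"
    by (simp add: eval_grid_spec_op N_def)
  also have "\<dots> \<le> 5000000 * real N ^ 3 * (\<Sum>q\<in>freq_cube K. freq_sqnorm q * (cmod (?a q))\<^sup>2) ^ 3"
    by (rule sum_Re_trig_poly_pow6_le) (simp_all add: mu0 N_def)
  also have "\<dots> \<le> 5000000 * real N ^ 3 * ?lap_energy ^ 3"
  proof (intro mult_left_mono power_mono sum_mono)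
    fix q :: "int \<times> int \<times> int"
    obtain l m n where q: "q = (l, m, n)"
      by (cases q)
    show "freq_sqnorm q * (cmod (?a q))\<^sup>2
        \<le> (case q of (l, m, n) \<Rightarrow> (4 * pi\<^sup>2 * freq_sqnorm (l, m, n))\<^sup>2 * (cmod (dft_coeff N f l m n))\<^sup>2)"
      using mult_right_mono[OF mu_le[of l m n], of "(cmod (dft_coeff N f l m n))\<^sup>2"]
      by (simp add: q norm_mult power_mult_distrib mult_ac del: freq_sqnorm.simps)
  qed (auto intro: sum_nonneg)
  finally have "grid_mean N (\<lambda>p. (eval_grid (spec_op K mu f) p) ^ 6)
      \<le> (1 / real N) ^ 3 * (5000000 * real N ^ 3 * ?lap_energy ^ 3)"
    unfolding grid_mean_def by (rule mult_left_mono) simp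
  also have "\<dots> = 5000000 * (grid_mean N (\<lambda>p. (eval_grid (lap_N K f) p)\<^sup>2)) ^ 3"
    unfolding grid_mean_def N_def sum_lap_N_sq by (simp add: field_simps)
  finally show ?thesis .
qed

lemma derivative_multiplier_le:
  assumes "x\<^sup>2 \<le> l\<^sup>2 + m\<^sup>2 + n\<^sup>2"
  shows "freq_sqnorm (l, m, n) * (cmod (\<i> * complex_of_real (2 * pi * real_of_int x)))\<^sup>2
           \<le> (4 * pi\<^sup>2 * freq_sqnorm (l, m, n))\<^sup>2"
proof -
  let ?s = "freq_sqnorm (l, m, n)"
  have "real_of_int (x\<^sup>2) \<le> ?s"
    using assms by (simp only: freq_sqnorm.simps of_int_le_iff)
  have "1 \<le> pi\<^sup>2"
    using pi_gt3 by (intro one_le_power) simp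
  then have "4 * pi\<^sup>2 * 1 \<le> (4 * pi\<^sup>2) * (4 * pi\<^sup>2)"
    by (intro mult_left_mono) simp_all
  have "?s * (cmod (\<i> * complex_of_real (2 * pi * real_of_int x)))\<^sup>2 = 4 * pi\<^sup>2 * (?s * real_of_int (x\<^sup>2))"
    by (simp add: norm_mult power_mult_distrib del: freq_sqnorm.simps)
  also have "\<dots> \<le> 4 * pi\<^sup>2 * (?s * ?s)"
    using \<open>real_of_int (x\<^sup>2) \<le> ?s\<close> by (intro mult_left_mono) auto
  also have "\<dots> \<le> (4 * pi\<^sup>2) * (4 * pi\<^sup>2) * (?s * ?s)"
    using \<open>4 * pi\<^sup>2 * 1 \<le> (4 * pi\<^sup>2) * (4 * pi\<^sup>2)\<close> by (intro mult_right_mono) simp_all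
  also have "\<dots> = (4 * pi\<^sup>2 * ?s)\<^sup>2"
    by (simp only: power2_eq_square mult_ac)
  finally show ?thesis .
qed

lemma power3_sum3_le:
  fixes a b c :: real
  assumes "0 \<le> a" "0 \<le> b" "0 \<le> c"
  shows "(a + b + c) ^ 3 \<le> 9 * (a ^ 3 + b ^ 3 + c ^ 3)"
proof -
  have squares: "(a + b + c)\<^sup>2 \<le> 3 * (a\<^sup>2 + b\<^sup>2 + c\<^sup>2)"
    using sum_squares_ge_zero[of "a - b" "b - c"] zero_le_power2[of "a - c"]
    by (simp add: power2_eq_square algebra_simps)
  have cubes: "(a + b + c) * (a\<^sup>2 + b\<^sup>2 + c\<^sup>2) \<le> 3 * (a ^ 3 + b ^ 3 + c ^ 3)"
  proof -
    have "0 \<le> (a - b)\<^sup>2 * (a + b) + (b - c)\<^sup>2 * (b + c) + (a - c)\<^sup>2 * (a + c)"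
      using assms by (intro add_nonneg_nonneg mult_nonneg_nonneg) auto
    then show ?thesis
      by (simp add: power2_eq_square power3_eq_cube algebra_simps)
  qed
  have "(a + b + c) ^ 3 = (a + b + c)\<^sup>2 * (a + b + c)"
    by (simp add: power2_eq_square power3_eq_cube)
  also have "\<dots> \<le> 3 * (a\<^sup>2 + b\<^sup>2 + c\<^sup>2) * (a + b + c)"
    using squares assms by (intro mult_right_mono) auto
  also have "\<dots> = 3 * ((a + b + c) * (a\<^sup>2 + b\<^sup>2 + c\<^sup>2))"
    by (simp only: mult_ac)
  also have "\<dots> \<le> 9 * (a ^ 3 + b ^ 3 + c ^ 3)"
    using cubes by linarith
  finally show ?thesis .
qed

lemma mean_grad_abs_pow6_le:
  fixes K :: nat
  defines "N \<equiv> 2 * K + 1"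
  shows "grid_mean N (\<lambda>p. (eval_grid (grad_abs K f) p) ^ 6)
           \<le> 27 * 5000000 * (grid_mean N (\<lambda>p. (eval_grid (lap_N K f) p)\<^sup>2)) ^ 3"
proof -
  let ?L = "grid_mean N (\<lambda>p. (eval_grid (lap_N K f) p)\<^sup>2)"
  let ?D6 = "\<lambda>D p. (eval_grid (D K f) p) ^ 6"
  have pointwise: "(eval_grid (grad_abs K f) p) ^ 6 \<le> 9 * (?D6 Dx p + ?D6 Dy p + ?D6 Dz p)" for p
  proof -
    obtain i j k where p: "p = (i, j, k)"
      by (cases p)
    let ?x = "Dx K f i j k" and ?y = "Dy K f i j k" and ?z = "Dz K f i j k"
    have "(sqrt (?x\<^sup>2 + ?y\<^sup>2 + ?z\<^sup>2)) ^ 6 = ((sqrt (?x\<^sup>2 + ?y\<^sup>2 + ?z\<^sup>2))\<^sup>2) ^ 3"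
      unfolding power_mult[symmetric] by simp
    also have "\<dots> = (?x\<^sup>2 + ?y\<^sup>2 + ?z\<^sup>2) ^ 3"
      by simp
    also have "\<dots> \<le> 9 * ((?x\<^sup>2) ^ 3 + (?y\<^sup>2) ^ 3 + (?z\<^sup>2) ^ 3)"
      by (rule power3_sum3_le) simp_all
    finally show ?thesis
      by (simp add: p grad_abs_def flip: power_mult)
  qed
  have derivatives: "grid_mean N (?D6 Dx) \<le> 5000000 * ?L ^ 3" "grid_mean N (?D6 Dy) \<le> 5000000 * ?L ^ 3"
    "grid_mean N (?D6 Dz) \<le> 5000000 * ?L ^ 3"
    unfolding N_def Dx_def Dy_def Dz_def
    by (rule mean_spec_op_pow6_le, simp, rule derivative_multiplier_le, simp)+
  have "grid_mean N (\<lambda>p. (eval_grid (grad_abs K f) p) ^ 6)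
      \<le> grid_mean N (\<lambda>p. 9 * (?D6 Dx p + ?D6 Dy p + ?D6 Dz p))"
    unfolding grid_mean_def by (intro mult_left_mono sum_mono pointwise) simp
  also have "\<dots> = 9 * (grid_mean N (?D6 Dx) + grid_mean N (?D6 Dy) + grid_mean N (?D6 Dz))"
    by (simp add: grid_mean_def sum.distrib sum_distrib_left algebra_simps)
  also have "\<dots> \<le> 27 * 5000000 * ?L ^ 3"
    using derivatives by simp
  finally show ?thesis .
qed

theorem proposition2p3:
  shows "\<exists>C > 0. \<forall>(K::nat) (f::grid_fun). K \<ge> 1 \<longrightarrow> periodic_grid (2 * K + 1) f \<longrightarrow>
           grad_norm K 6 f \<le> C * grid_norm (2 * K + 1) 2 (lap_N K f)"
proof (intro exI[of _ "(27 * 5000000) powr (1 / 6)"] conjI allI impI)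
  fix K :: nat and f :: grid_fun
  let ?L = "grid_mean (2 * K + 1) (\<lambda>p. (eval_grid (lap_N K f) p)\<^sup>2)"
  have "0 \<le> ?L"
    by (intro grid_mean_nonneg) simp
  have "grad_norm K 6 f \<le> (27 * 5000000 * ?L ^ 3) powr (1 / 6)"
    unfolding grad_norm_eq grid_norm_power_eq[of 6, simplified]
    by (intro powr_mono2 mean_grad_abs_pow6_le grid_mean_nonneg) simp_all
  also have "\<dots> = (27 * 5000000) powr (1 / 6) * ?L powr (1 / 2)"
    using \<open>0 \<le> ?L\<close> by (simp add: powr_mult powr_powr flip: powr_numeral)
  also have "?L powr (1 / 2) = grid_norm (2 * K + 1) 2 (lap_N K f)"
    unfolding grid_norm_power_eq[of 2, simplified] by simp
  finally show "grad_norm K 6 f \<le> (27 * 5000000) powr (1 / 6) * grid_norm (2 * K + 1) 2 (lap_N K f)" .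
qed simp

end
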